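(* (Working in $\mathbf{ZF}$.) Let $X$ be a generalized topological space and let $(\alpha X,\alpha)$ be a compactification of the topologization $X_{top}$ of $X$, with topology $\tau_{\alpha X}$. Let $\mathrm{Op}^S_{\alpha X}=\{V\in\tau_{\alpha X}:\alpha^{-1}(V)\in\mathrm{Op}_X\}$ and $\mathrm{Cov}^S_{\alpha X}=\{\mathcal V\subseteq\mathrm{Op}^S_{\alpha X}:\{\alpha^{-1}(V):V\in\mathcal V\}\in\mathrm{Cov}_X\}$, and let $\alpha^S X$ denote $((\alpha X,\mathrm{Op}^S_{\alpha X},\mathrm{Cov}^S_{\alpha X}),\alpha)$. Then: (i) $\alpha^S X$ is a strict compactification of the gts $X$; (ii) if the topology $\tau(\mathrm{Op}^S_{\alpha X})$ generated by $\mathrm{Op}^S_{\alpha X}$ is Hausdorff, then $\tau_{\alpha X}=\tau(\mathrm{Op}^S_{\alpha X})$; (iii) if $\alpha(X)\in\tau_{\alpha X}$, then the remainder $Y=\alpha X\setminus\alpha(X)$, as a subspace of the gts $(\alpha X,\mathrm{Op}^S_{\alpha X},\mathrm{Cov}^S_{\alpha X})$, is a topological gts.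
   Context: A generalized topological space (gts) $(X,\mathrm{Op}_X,\mathrm{Cov}_X)$ is in the sense of Delfs–Knebusch: $\mathrm{Op}_X\subseteq\mathcal P(X)$, $\mathrm{Cov}_X\subseteq\mathcal P(\mathrm{Op}_X)$ with (A1) $\emptyset,X$ open; (A2) finite unions/intersections of open sets open; (A3) finite families of open sets admissible (i.e. in $\mathrm{Cov}_X$); (A4) unions of admissible families open; (A5) traces of an admissible family on an open subset of its union are admissible; (A6) admissible refinements of members of an admissible family combine to an admissible family; (A7) an open family with the same union as an admissible $\mathcal U$ and coarser than $\mathcal U$ is admissible; (A8) a subset of the union of an admissible $\mathcal U$ whose traces on all members of $\mathcal U$ are open is open. A generalized topology in a set $Z$ is a $\mathrm{Cov}$ with $(Z,\bigcup\mathrm{Cov},\mathrm{Cov})$ a gts; $\langle\mathcal A\rangle_Z$ is the smallest generalized topology in $Z$ containing $\mathcal A$. $X_{top}$ is $X$ with the topology generated by $\mathrm{Op}_X$; weakly Hausdorff/topologically compact means $X_{top}$ is Hausdorff/compact. A compactification of a topological space $T$ is a pair $(\alpha T,\alpha)$ where $\alpha T$ is a compact topological space and $\alpha:T\to\alpha T$ is a homeomorphic embedding with dense image. For $Y\subseteq X$ and a collection $\mathcal A$ of families, $\mathcal A\cap_2Y=\{\{Y\cap U:U\in\mathcal U\}:\mathcal U\in\mathcal A\}$; the subspace $Y$ of a gts $X$ is $(Y,\langle\mathrm{Cov}_X\cap_2Y\rangle_Y)$. A gts is topological if its $\mathrm{Cov}$ consists of all families of open sets. A map $f:X\to Z$ of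 gtses is strictly continuous if $\{f^{-1}(V):V\in\mathcal V\}\in\mathrm{Cov}_X$ for all $\mathcal V\in\mathrm{Cov}_Z$; it is a strict embedding if it is a strictly continuous injection with $\{\{f(U):U\in\mathcal U\}:\mathcal U\in\mathrm{Cov}_X\}\subseteq\mathrm{Cov}_Z\cap_2f(X)$. A strict compactification of a gts $X$ is a pair $(\alpha X,\alpha)$ with $\alpha X$ a topologically compact gts and $\alpha:X\to\alpha X$ a strict embedding such that $\alpha(X)$ is dense in $(\alpha X)_{top}$. *)

theory Defs
  imports "HOL-Analysis.Analysis"
begin

text \<open>Generalized topological spaces (Delfs--Knebusch). A gts is represented by
  its carrier X, its family Op of open sets and its family Cov of admissible
  families of open sets.\<close>

definition gts :: "'a set \<Rightarrow> 'a set set \<Rightarrow> 'a set set set \<Rightarrow> bool" where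
  "gts X Op Cov \<longleftrightarrow>
     Op \<subseteq> Pow X \<and> Cov \<subseteq> Pow Op \<and>
     \<comment> \<open>(A1)\<close>
     {} \<in> Op \<and> X \<in> Op \<and>
     \<comment> \<open>(A2)\<close>
     (\<forall>U\<in>Op. \<forall>V\<in>Op. U \<union> V \<in> Op \<and> U \<inter> V \<in> Op) \<and>
     \<comment> \<open>(A3)\<close>
     (\<forall>\<U>. finite \<U> \<and> \<U> \<subseteq> Op \<longrightarrow> \<U> \<in> Cov) \<and>
     \<comment> \<open>(A4)\<close>
     (\<forall>\<U>\<in>Cov. \<Union>\<U> \<in> Op) \<and>
     \<comment> \<open>(A5)\<close>
     (\<forall>\<U>\<in>Cov. \<forall>V\<in>Op. V \<subseteq> \<Union>\<U> \<longrightarrow> (\<lambda>U. V \<inter> U) ` \<U> \<in> Cov) \<and>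
     \<comment> \<open>(A6)\<close>
     (\<forall>\<U>\<in>Cov. \<forall>\<V>. (\<forall>U\<in>\<U>. \<V> U \<in> Cov \<and> \<Union>(\<V> U) = U) \<longrightarrow> \<Union>(\<V> ` \<U>) \<in> Cov) \<and>
     \<comment> \<open>(A7)\<close>
     (\<forall>\<U>\<in>Cov. \<forall>\<V>. \<V> \<subseteq> Op \<and> \<Union>\<V> = \<Union>\<U> \<and> (\<forall>U\<in>\<U>. \<exists>V\<in>\<V>. U \<subseteq> V) \<longrightarrow> \<V> \<in> Cov) \<and>
     \<comment> \<open>(A8)\<close>
     (\<forall>\<U>\<in>Cov. \<forall>W. W \<subseteq> \<Union>\<U> \<and> (\<forall>U\<in>\<U>. W \<inter> U \<in> Op) \<longrightarrow> W \<in> Op)"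

definition gen_topology_in :: "'a set \<Rightarrow> 'a set set set \<Rightarrow> bool" where
  "gen_topology_in Z Cov \<longleftrightarrow> gts Z (\<Union>Cov) Cov"

definition gen_topology_generated :: "'a set \<Rightarrow> 'a set set set \<Rightarrow> 'a set set set" where
  "gen_topology_generated Z \<A> = \<Inter>{Cov. gen_topology_in Z Cov \<and> \<A> \<subseteq> Cov}"

definition gts_top :: "'a set set \<Rightarrow> 'a topology" where
  "gts_top Op = topology_generated_by Op"

definition topologically_compact :: "'a set set \<Rightarrow> bool" where
  "topologically_compact Op \<longleftrightarrow> compact_space (gts_top Op)"

definition weakly_Hausdorff :: "'a set set \<Rightarrow> bool" where
  "weakly_Hausdorff Op \<longleftrightarrow> Hausdorff_space (gts_top Op)"

definition cap2 :: "'a set set set \<Rightarrow> 'a set \<Rightarrow> 'a set set set" where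
  "cap2 \<A> Y = (\<lambda>\<U>. (\<lambda>U. Y \<inter> U) ` \<U>) ` \<A>"

definition subspace_Cov :: "'a set set set \<Rightarrow> 'a set \<Rightarrow> 'a set set set" where
  "subspace_Cov Cov Y = gen_topology_generated Y (cap2 Cov Y)"

definition subspace_Op :: "'a set set set \<Rightarrow> 'a set \<Rightarrow> 'a set set" where
  "subspace_Op Cov Y = \<Union>(subspace_Cov Cov Y)"

definition topological_gts :: "'a set \<Rightarrow> 'a set set \<Rightarrow> 'a set set set \<Rightarrow> bool" where
  "topological_gts X Op Cov \<longleftrightarrow> gts X Op Cov \<and> Cov = Pow Op"

definition strictly_continuous ::
  "'a set \<Rightarrow> 'a set set \<Rightarrow> 'a set set set \<Rightarrow> 'b set \<Rightarrow> 'b set set \<Rightarrow> 'b set set set \<Rightarrow> ('a \<Rightarrow> 'b) \<Rightarrow> bool" where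
  "strictly_continuous X OpX CovX Z OpZ CovZ f \<longleftrightarrow>
     f ` X \<subseteq> Z \<and> (\<forall>\<V>\<in>CovZ. (\<lambda>V. f -` V \<inter> X) ` \<V> \<in> CovX)"

definition strict_embedding ::
  "'a set \<Rightarrow> 'a set set \<Rightarrow> 'a set set set \<Rightarrow> 'b set \<Rightarrow> 'b set set \<Rightarrow> 'b set set set \<Rightarrow> ('a \<Rightarrow> 'b) \<Rightarrow> bool" where
  "strict_embedding X OpX CovX Z OpZ CovZ f \<longleftrightarrow>
     strictly_continuous X OpX CovX Z OpZ CovZ f \<and> inj_on f X \<and>
     (\<lambda>\<U>. (\<lambda>U. f ` U) ` \<U>) ` CovX \<subseteq> cap2 CovZ (f ` X)"

definition strict_compactification ::
  "'a set \<Rightarrow> 'a set set \<Rightarrow> 'a set set set \<Rightarrow> 'b set \<Rightarrow> 'b set set \<Rightarrow> 'b set set set \<Rightarrow> ('a \<Rightarrow> 'b) \<Rightarrow> bool" where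
  "strict_compactification X OpX CovX Z OpZ CovZ f \<longleftrightarrow>
     gts Z OpZ CovZ \<and> topologically_compact OpZ \<and>
     strict_embedding X OpX CovX Z OpZ CovZ f \<and>
     (gts_top OpZ) closure_of (f ` X) = Z"

definition compactification :: "'a topology \<Rightarrow> 'b topology \<Rightarrow> ('a \<Rightarrow> 'b) \<Rightarrow> bool" where
  "compactification T K f \<longleftrightarrow>
     compact_space K \<and> embedding_map T K f \<and> K closure_of (f ` topspace T) = topspace K"

end

theory Submission
  imports Defs
begin

text \<open>
  The strict structure on \<open>\<alpha>X\<close> is the pullback of the gts \<open>X\<close> along \<open>\<alpha>\<close>, restricted to
  open sets of \<open>\<alpha>X\<close>, so the axioms (A1)--(A8) transfer from \<open>X\<close>. The topology it generates
  is coarser than that of \<open>\<alpha>X\<close>; hence it is compact and \<open>\<alpha>(X)\<close> stays dense in it. Since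
  \<open>\<alpha>\<close> is a topological embedding, every open \<open>U\<close> of \<open>X\<close> is the preimage of an open \<open>V\<close> of
  \<open>\<alpha>X\<close> with \<open>\<alpha>(U) = \<alpha>(X) \<inter> V\<close>, which makes \<open>\<alpha>\<close> a strict embedding. A Hausdorff topology
  coarser than a compact one coincides with it, giving (ii). If \<open>\<alpha>(X)\<close> is open, every open
  subset \<open>W \<inter> Y\<close> of the remainder \<open>Y\<close> is the trace of \<open>W \<union> \<alpha>(X)\<close>, whose preimage is all
  of \<open>X\<close>; so every family of open subsets of \<open>Y\<close> is the trace of an admissible family, and
  \<open>Y\<close> is topological.
\<close>

lemma
  assumes "gts X Op Cov"
  shows gts_Op_Pow: "Op \<subseteq> Pow X"
    and gts_Cov_Pow: "Cov \<subseteq> Pow Op"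
    and gts_empty_open: "{} \<in> Op"
    and gts_space_open: "X \<in> Op"
    and gts_Un_open: "\<lbrakk>U \<in> Op; V \<in> Op\<rbrakk> \<Longrightarrow> U \<union> V \<in> Op"
    and gts_Int_open: "\<lbrakk>U \<in> Op; V \<in> Op\<rbrakk> \<Longrightarrow> U \<inter> V \<in> Op"
    and gts_finite_Cov: "\<lbrakk>finite \<U>; \<U> \<subseteq> Op\<rbrakk> \<Longrightarrow> \<U> \<in> Cov"
    and gts_Union_open: "\<U> \<in> Cov \<Longrightarrow> \<Union>\<U> \<in> Op"
    and gts_Cov_trace: "\<lbrakk>\<U> \<in> Cov; V \<in> Op; V \<subseteq> \<Union>\<U>\<rbrakk> \<Longrightarrow> (\<lambda>U. V \<inter> U) ` \<U> \<in> Cov"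
    and gts_Cov_refine:
      "\<lbrakk>\<U> \<in> Cov; \<And>U. U \<in> \<U> \<Longrightarrow> \<V> U \<in> Cov \<and> \<Union>(\<V> U) = U\<rbrakk> \<Longrightarrow> \<Union>(\<V> ` \<U>) \<in> Cov"
    and gts_Cov_coarsen:
      "\<lbrakk>\<U> \<in> Cov; \<W> \<subseteq> Op; \<Union>\<W> = \<Union>\<U>; \<And>U. U \<in> \<U> \<Longrightarrow> \<exists>W\<in>\<W>. U \<subseteq> W\<rbrakk> \<Longrightarrow> \<W> \<in> Cov"
    and gts_open_local:
      "\<lbrakk>\<U> \<in> Cov; W \<subseteq> \<Union>\<U>; \<And>U. U \<in> \<U> \<Longrightarrow> W \<inter> U \<in> Op\<rbrakk> \<Longrightarrow> W \<in> Op"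
  using assms unfolding gts_def by (metis (no_types))+

text \<open>Axiom (A6) for a family \<open>g ` I\<close> whose index map \<open>g\<close> need not be injective.\<close>

lemma gts_Cov_refine_indexed:
  assumes gts: "gts X Op Cov" and cov: "g ` I \<in> Cov"
    and refine: "\<And>i. i \<in> I \<Longrightarrow> \<V> i \<in> Cov \<and> \<Union>(\<V> i) = g i"
  shows "(\<Union>i\<in>I. \<V> i) \<in> Cov"
proof -
  let ?ch = "inv_into I g"
  have refine_ch: "\<V> (?ch W) \<in> Cov \<and> \<Union>(\<V> (?ch W)) = W" if "W \<in> g ` I" for W
    using refine[OF inv_into_into[OF that]] by (simp add: f_inv_into_f[OF that])
  have chosen: "(\<Union>W\<in>g ` I. \<V> (?ch W)) \<in> Cov"
    using refine_ch by (rule gts_Cov_refine[OF gts cov])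
  show ?thesis
  proof (rule gts_Cov_coarsen[OF gts chosen])
    show "(\<Union>i\<in>I. \<V> i) \<subseteq> Op"
    proof (rule UN_least)
      fix i assume "i \<in> I"
      then show "\<V> i \<subseteq> Op" using refine gts_Cov_Pow[OF gts] by (meson PowD subsetD)
    qed
    have "\<Union>(\<Union>W\<in>g ` I. \<V> (?ch W)) = (\<Union>W\<in>g ` I. \<Union>(\<V> (?ch W)))"
      by blast
    also have "\<dots> = \<Union>(g ` I)"
      using refine_ch by simp
    also have "\<dots> = (\<Union>i\<in>I. \<Union>(\<V> i))"
      using refine by simp
    also have "\<dots> = \<Union>(\<Union>i\<in>I. \<V> i)"
      by blast
    finally show "\<Union>(\<Union>i\<in>I. \<V> i) = \<Union>(\<Union>W\<in>g ` I. \<V> (?ch W))" ..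
    show "\<exists>W\<in>\<Union>i\<in>I. \<V> i. U \<subseteq> W" if "U \<in> (\<Union>W\<in>g ` I. \<V> (?ch W))" for U
    proof -
      from that obtain W where "W \<in> g ` I" "U \<in> \<V> (?ch W)" by blast
      then have "U \<in> (\<Union>i\<in>I. \<V> i)" by (rule UN_I[OF inv_into_into])
      then show ?thesis by (intro bexI[of _ U]) simp_all
    qed
  qed
qed

lemma gts_topology: "gts (topspace T) {U. openin T U} (Pow {U. openin T U})"
  unfolding gts_def
proof (intro conjI ballI allI impI)
  fix \<U> W assume "\<U> \<in> Pow {U. openin T U}" "W \<subseteq> \<Union>\<U> \<and> (\<forall>U\<in>\<U>. W \<inter> U \<in> {U. openin T U})"
  then have "openin T (\<Union>U\<in>\<U>. W \<inter> U)" by (intro openin_Union) auto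
  moreover have "W = (\<Union>U\<in>\<U>. W \<inter> U)" using \<open>W \<subseteq> \<Union>\<U> \<and> _\<close> by blast
  ultimately show "W \<in> {U. openin T U}" by simp
qed (auto dest: openin_subset)

lemma gen_topology_generated_eq:
  assumes "gen_topology_in Z Cov"
  shows "gen_topology_generated Z Cov = Cov"
  using assms unfolding gen_topology_generated_def by blast

lemma topspace_gts_top:
  assumes "gts X Op Cov"
  shows "topspace (gts_top Op) = X"
  using gts_Op_Pow[OF assms] gts_space_open[OF assms] by (auto simp: gts_top_def)

lemma embedding_map_openin_trace:
  assumes emb: "embedding_map T K f" and U: "openin T U"
  obtains V where "openin K V" "f -` V \<inter> topspace T = U" "f ` U = f ` topspace T \<inter> V"
proof -
  have hom: "homeomorphic_map T (subtopology K (f ` topspace T)) f"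
    using emb by (simp add: embedding_map_def)
  have UT: "U \<subseteq> topspace T" using openin_subset[OF U] .
  then have "openin (subtopology K (f ` topspace T)) (f ` U)"
    using homeomorphic_map_openness[OF hom] U by simp
  then obtain V where V: "openin K V" "f ` U = V \<inter> f ` topspace T"
    by (auto simp: openin_subtopology)
  have "inj_on f (topspace T)"
    using homeomorphic_imp_injective_map[OF hom] .
  then have "f -` V \<inter> topspace T = U"
    using V(2) UT by (auto simp: inj_on_image_mem_iff[symmetric])
  with V show thesis by (intro that) auto
qed

lemma embedding_map_image_subset_topspace:
  assumes "embedding_map T K f"
  shows "f ` topspace T \<subseteq> topspace K"
proof -
  have "continuous_map T (subtopology K (f ` topspace T)) f"
    using assms by (simp add: embedding_map_def homeomorphic_imp_continuous_map)
  then show ?thesis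
    by (simp add: continuous_map_in_subtopology continuous_map_image_subset_topspace)
qed

lemma compact_space_coarser:
  assumes "continuous_map K T id" "topspace T = topspace K" "compact_space K"
  shows "compact_space T"
  using image_compactin[of K "topspace K" T id] assms by (simp add: compact_space_def)

lemma closure_of_coarser:
  assumes "continuous_map K T id"
  shows "K closure_of S \<subseteq> T closure_of S"
  using continuous_map_image_closure_subset[OF assms] by simp

lemma compact_Hausdorff_coarser_eq:
  assumes "compact_space K" "Hausdorff_space T" "continuous_map K T id" "topspace T = topspace K"
  shows "T = K"
proof -
  have "closed_map K T id"
    using assms(3,1,2) by (rule continuous_imp_closed_map)
  then have "homeomorphic_map K T id"
    using assms(3,4) by (intro bijective_closed_imp_homeomorphic_map) auto
  then show ?thesis by simp
qed

definition strict_Op :: "'b topology \<Rightarrow> ('a \<Rightarrow> 'b) \<Rightarrow> 'a set \<Rightarrow> 'a set set \<Rightarrow> 'b set set" where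
  "strict_Op K f X OpX = {V. openin K V \<and> f -` V \<inter> X \<in> OpX}"

definition strict_Cov ::
  "'b topology \<Rightarrow> ('a \<Rightarrow> 'b) \<Rightarrow> 'a set \<Rightarrow> 'a set set \<Rightarrow> 'a set set set \<Rightarrow> 'b set set set" where
  "strict_Cov K f X OpX CovX =
     {\<V>. \<V> \<subseteq> strict_Op K f X OpX \<and> (\<lambda>V. f -` V \<inter> X) ` \<V> \<in> CovX}"

lemma Union_image_vimage_Int: "\<Union>((\<lambda>V. f -` V \<inter> X) ` \<V>) = f -` \<Union>\<V> \<inter> X"
  by blast

lemma topspace_in_strict_Op:
  assumes "X \<in> OpX" "f ` X \<subseteq> topspace K"
  shows "topspace K \<in> strict_Op K f X OpX"
proof -
  have "f -` topspace K \<inter> X = X" using assms(2) by blast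
  then show ?thesis using assms(1) by (simp add: strict_Op_def)
qed

lemma
  assumes gts: "gts X OpX CovX" and "U \<in> strict_Op K f X OpX" "V \<in> strict_Op K f X OpX"
  shows strict_Op_Int: "U \<inter> V \<in> strict_Op K f X OpX"
    and strict_Op_Un: "U \<union> V \<in> strict_Op K f X OpX"
proof -
  have "f -` (U \<inter> V) \<inter> X = (f -` U \<inter> X) \<inter> (f -` V \<inter> X)"
    "f -` (U \<union> V) \<inter> X = (f -` U \<inter> X) \<union> (f -` V \<inter> X)" by blast+
  then show "U \<inter> V \<in> strict_Op K f X OpX" "U \<union> V \<in> strict_Op K f X OpX"
    using assms gts_Int_open[OF gts] gts_Un_open[OF gts] by (auto simp: strict_Op_def)
qed

lemma strict_Cov_traces:
  assumes gts: "gts X OpX CovX" and cov: "\<U> \<in> strict_Cov K f X OpX CovX"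
    and V: "V \<in> strict_Op K f X OpX" "V \<subseteq> \<Union>\<U>"
  shows "(\<lambda>U. V \<inter> U) ` \<U> \<in> strict_Cov K f X OpX CovX"
proof -
  let ?pre = "\<lambda>V. f -` V \<inter> X"
  have "(\<lambda>U. ?pre V \<inter> U) ` ?pre ` \<U> \<in> CovX"
  proof (rule gts_Cov_trace[OF gts])
    show "?pre ` \<U> \<in> CovX" "?pre V \<in> OpX"
      using cov V by (auto simp: strict_Cov_def strict_Op_def)
    show "?pre V \<subseteq> \<Union>(?pre ` \<U>)" using V(2) by blast
  qed
  moreover have "(\<lambda>U. ?pre V \<inter> U) ` ?pre ` \<U> = ?pre ` (\<lambda>U. V \<inter> U) ` \<U>"
    by (auto simp: image_image)
  moreover have "(\<lambda>U. V \<inter> U) ` \<U> \<subseteq> strict_Op K f X OpX"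
    using cov V strict_Op_Int[OF gts] unfolding strict_Cov_def by blast
  ultimately show ?thesis by (simp add: strict_Cov_def)
qed

lemma strict_Union_open:
  assumes gts: "gts X OpX CovX" and cov: "\<U> \<in> strict_Cov K f X OpX CovX"
  shows "\<Union>\<U> \<in> strict_Op K f X OpX"
proof -
  have "openin K (\<Union>\<U>)"
    using cov by (intro openin_Union) (auto simp: strict_Cov_def strict_Op_def)
  moreover have "\<Union>((\<lambda>V. f -` V \<inter> X) ` \<U>) \<in> OpX"
    by (rule gts_Union_open[OF gts]) (use cov in \<open>simp add: strict_Cov_def\<close>)
  ultimately show ?thesis unfolding Union_image_vimage_Int by (simp add: strict_Op_def)
qed

lemma strict_Cov_refine:
  assumes gts: "gts X OpX CovX" and cov: "\<U> \<in> strict_Cov K f X OpX CovX"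
    and refine: "\<And>U. U \<in> \<U> \<Longrightarrow> \<V> U \<in> strict_Cov K f X OpX CovX \<and> \<Union>(\<V> U) = U"
  shows "\<Union>(\<V> ` \<U>) \<in> strict_Cov K f X OpX CovX"
proof -
  let ?pre = "\<lambda>V. f -` V \<inter> X"
  have "(\<Union>U\<in>\<U>. ?pre ` \<V> U) \<in> CovX"
  proof (rule gts_Cov_refine_indexed[OF gts])
    show "?pre ` \<U> \<in> CovX" using cov by (simp add: strict_Cov_def)
    fix U assume "U \<in> \<U>"
    then have "\<V> U \<in> strict_Cov K f X OpX CovX" "\<Union>(\<V> U) = U" using refine by auto
    then show "?pre ` \<V> U \<in> CovX \<and> \<Union>(?pre ` \<V> U) = ?pre U"
      unfolding Union_image_vimage_Int by (simp add: strict_Cov_def)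
  qed
  moreover have "(\<Union>U\<in>\<U>. ?pre ` \<V> U) = ?pre ` \<Union>(\<V> ` \<U>)"
    by blast
  moreover have "\<Union>(\<V> ` \<U>) \<subseteq> strict_Op K f X OpX"
  proof (rule UN_least)
    fix U assume "U \<in> \<U>"
    then show "\<V> U \<subseteq> strict_Op K f X OpX" using refine by (auto simp: strict_Cov_def)
  qed
  ultimately show ?thesis by (simp add: strict_Cov_def)
qed

lemma strict_Cov_coarsen:
  assumes gts: "gts X OpX CovX" and cov: "\<U> \<in> strict_Cov K f X OpX CovX"
    and "\<W> \<subseteq> strict_Op K f X OpX" "\<Union>\<W> = \<Union>\<U>"
    and coarser: "\<And>U. U \<in> \<U> \<Longrightarrow> \<exists>W\<in>\<W>. U \<subseteq> W"
  shows "\<W> \<in> strict_Cov K f X OpX CovX"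
proof -
  let ?pre = "\<lambda>V. f -` V \<inter> X"
  have "?pre ` \<W> \<in> CovX"
  proof (rule gts_Cov_coarsen[OF gts])
    show "?pre ` \<U> \<in> CovX" using cov by (simp add: strict_Cov_def)
    show "?pre ` \<W> \<subseteq> OpX" using assms(3) by (auto simp: strict_Op_def)
    show "\<Union>(?pre ` \<W>) = \<Union>(?pre ` \<U>)"
      unfolding Union_image_vimage_Int assms(4) ..
    fix V assume "V \<in> ?pre ` \<U>"
    then obtain U where "U \<in> \<U>" "V = ?pre U" by blast
    moreover obtain W where "W \<in> \<W>" "U \<subseteq> W" using coarser[OF \<open>U \<in> \<U>\<close>] ..
    ultimately show "\<exists>W\<in>?pre ` \<W>. V \<subseteq> W" by (intro bexI[of _ "?pre W"]) auto
  qed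
  then show ?thesis using assms(3) by (simp add: strict_Cov_def)
qed

lemma strict_open_local:
  assumes gts: "gts X OpX CovX" and cov: "\<U> \<in> strict_Cov K f X OpX CovX"
    and "W \<subseteq> \<Union>\<U>" and local: "\<And>U. U \<in> \<U> \<Longrightarrow> W \<inter> U \<in> strict_Op K f X OpX"
  shows "W \<in> strict_Op K f X OpX"
proof -
  let ?pre = "\<lambda>V. f -` V \<inter> X"
  have "W = (\<Union>U\<in>\<U>. W \<inter> U)" using assms(3) by blast
  moreover have "openin K (\<Union>U\<in>\<U>. W \<inter> U)"
    using local by (intro openin_Union) (auto simp: strict_Op_def)
  moreover have "?pre W \<in> OpX"
  proof (rule gts_open_local[OF gts])
    show "?pre ` \<U> \<in> CovX" using cov by (simp add: strict_Cov_def)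
    show "?pre W \<subseteq> \<Union>(?pre ` \<U>)" using assms(3) by blast
    fix V assume "V \<in> ?pre ` \<U>"
    then obtain U where "U \<in> \<U>" "V = ?pre U" by blast
    then have "?pre (W \<inter> U) \<in> OpX" using local by (simp add: strict_Op_def)
    moreover have "?pre (W \<inter> U) = ?pre W \<inter> ?pre U" by blast
    ultimately show "?pre W \<inter> V \<in> OpX" using \<open>V = ?pre U\<close> by simp
  qed
  ultimately show ?thesis by (simp add: strict_Op_def)
qed

lemma gts_strict:
  assumes gts: "gts X OpX CovX" and "f ` X \<subseteq> topspace K"
  shows "gts (topspace K) (strict_Op K f X OpX) (strict_Cov K f X OpX CovX)"
  unfolding gts_def
proof (intro conjI ballI allI impI)
  show "strict_Op K f X OpX \<subseteq> Pow (topspace K)"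
    using openin_subset by (auto simp: strict_Op_def)
  show "strict_Cov K f X OpX CovX \<subseteq> Pow (strict_Op K f X OpX)"
    by (auto simp: strict_Cov_def)
  show "{} \<in> strict_Op K f X OpX"
    using gts_empty_open[OF gts] by (simp add: strict_Op_def)
  show "topspace K \<in> strict_Op K f X OpX"
    using gts_space_open[OF gts] assms(2) by (rule topspace_in_strict_Op)
next
  fix U V assume "U \<in> strict_Op K f X OpX" "V \<in> strict_Op K f X OpX"
  then show "U \<union> V \<in> strict_Op K f X OpX" "U \<inter> V \<in> strict_Op K f X OpX"
    by (simp_all add: strict_Op_Un[OF gts] strict_Op_Int[OF gts])
next
  fix \<U> assume \<U>: "finite \<U> \<and> \<U> \<subseteq> strict_Op K f X OpX"
  have "(\<lambda>V. f -` V \<inter> X) ` \<U> \<in> CovX"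
    by (rule gts_finite_Cov[OF gts]) (use \<U> in \<open>auto simp: strict_Op_def\<close>)
  then show "\<U> \<in> strict_Cov K f X OpX CovX"
    using \<U> by (simp add: strict_Cov_def)
next
  fix \<U> assume "\<U> \<in> strict_Cov K f X OpX CovX"
  then show "\<Union>\<U> \<in> strict_Op K f X OpX" by (rule strict_Union_open[OF gts])
next
  fix \<U> V assume "\<U> \<in> strict_Cov K f X OpX CovX" "V \<in> strict_Op K f X OpX" "V \<subseteq> \<Union>\<U>"
  then show "(\<lambda>U. V \<inter> U) ` \<U> \<in> strict_Cov K f X OpX CovX" by (rule strict_Cov_traces[OF gts])
next
  fix \<U> \<V>
  assume cov: "\<U> \<in> strict_Cov K f X OpX CovX"
    and refine: "\<forall>U\<in>\<U>. \<V> U \<in> strict_Cov K f X OpX CovX \<and> \<Union>(\<V> U) = U"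
  show "\<Union>(\<V> ` \<U>) \<in> strict_Cov K f X OpX CovX"
    by (rule strict_Cov_refine[OF gts cov]) (use refine in auto)
next
  fix \<U> \<W>
  assume cov: "\<U> \<in> strict_Cov K f X OpX CovX"
    and coarser: "\<W> \<subseteq> strict_Op K f X OpX \<and> \<Union>\<W> = \<Union>\<U> \<and> (\<forall>U\<in>\<U>. \<exists>W\<in>\<W>. U \<subseteq> W)"
  show "\<W> \<in> strict_Cov K f X OpX CovX"
    by (rule strict_Cov_coarsen[OF gts cov]) (use coarser in auto)+
next
  fix \<U> W
  assume cov: "\<U> \<in> strict_Cov K f X OpX CovX"
    and local: "W \<subseteq> \<Union>\<U> \<and> (\<forall>U\<in>\<U>. W \<inter> U \<in> strict_Op K f X OpX)"
  show "W \<in> strict_Op K f X OpX"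
    by (rule strict_open_local[OF gts cov]) (use local in auto)+
qed

lemma
  assumes "X \<in> OpX" "f ` X \<subseteq> topspace K"
  shows topspace_strict_topology: "topspace (topology_generated_by (strict_Op K f X OpX)) = topspace K"
    and continuous_map_id_strict_topology:
      "continuous_map K (topology_generated_by (strict_Op K f X OpX)) id"
proof -
  have top: "topspace K \<in> strict_Op K f X OpX"
    using assms by (rule topspace_in_strict_Op)
  moreover have "strict_Op K f X OpX \<subseteq> Pow (topspace K)"
    using openin_subset by (auto simp: strict_Op_def)
  ultimately show "topspace (topology_generated_by (strict_Op K f X OpX)) = topspace K"
    by auto
  show "continuous_map K (topology_generated_by (strict_Op K f X OpX)) id"
  proof (rule continuous_on_generated_topo)
    fix U assume "U \<in> strict_Op K f X OpX"
    then have "openin K U" by (simp add: strict_Op_def)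
    then show "openin K (id -` U \<inter> topspace K)"
      by (simp add: Int_absorb2 openin_subset)
  qed (use top in auto)
qed

lemma strict_Op_extends_open:
  assumes gts: "gts X OpX CovX" and emb: "embedding_map (gts_top OpX) K f" and U: "U \<in> OpX"
  obtains V where "V \<in> strict_Op K f X OpX" "f -` V \<inter> X = U" "f ` U = f ` X \<inter> V"
proof -
  have "openin (gts_top OpX) U"
    unfolding gts_top_def using U by (rule topology_generated_by_Basis)
  with emb obtain V where "openin K V" "f -` V \<inter> X = U" "f ` U = f ` X \<inter> V"
    by (rule embedding_map_openin_trace) (simp add: topspace_gts_top[OF gts])
  with U show thesis by (intro that[of V]) (simp_all add: strict_Op_def)
qed

lemma strict_embedding_strict:
  assumes gts: "gts X OpX CovX" and emb: "embedding_map (gts_top OpX) K f"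
  shows "strict_embedding X OpX CovX (topspace K) (strict_Op K f X OpX) (strict_Cov K f X OpX CovX) f"
proof -
  let ?pre = "\<lambda>V. f -` V \<inter> X"
  have sub: "f ` X \<subseteq> topspace K"
    using embedding_map_image_subset_topspace[OF emb] by (simp add: topspace_gts_top[OF gts])
  have "inj_on f (topspace (gts_top OpX))"
    using emb unfolding embedding_map_def by (rule homeomorphic_imp_injective_map)
  then have inj: "inj_on f X" by (simp add: topspace_gts_top[OF gts])
  have "\<exists>V. V \<in> strict_Op K f X OpX \<and> ?pre V = U \<and> f ` U = f ` X \<inter> V" if U: "U \<in> OpX" for U
  proof -
    obtain V where "V \<in> strict_Op K f X OpX" "?pre V = U" "f ` U = f ` X \<inter> V"
      by (rule strict_Op_extends_open[OF gts emb U])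
    then show ?thesis by blast
  qed
  then obtain ext where ext: "\<And>U. U \<in> OpX \<Longrightarrow>
      ext U \<in> strict_Op K f X OpX \<and> ?pre (ext U) = U \<and> f ` U = f ` X \<inter> ext U"
    by metis
  have traces: "(\<lambda>U. f ` U) ` \<U> \<in> cap2 (strict_Cov K f X OpX CovX) (f ` X)" if cov: "\<U> \<in> CovX" for \<U>
  proof -
    have ops: "\<U> \<subseteq> OpX" using cov gts_Cov_Pow[OF gts] by auto
    then have "?pre (ext U) = U" "f ` X \<inter> ext U = f ` U" if "U \<in> \<U>" for U
      using ext that by auto
    then have "?pre ` ext ` \<U> = \<U>" "(\<lambda>V. f ` X \<inter> V) ` ext ` \<U> = (\<lambda>U. f ` U) ` \<U>"
      by (simp_all add: image_image cong: image_cong)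
    moreover have "ext ` \<U> \<subseteq> strict_Op K f X OpX" using ops ext by blast
    ultimately have "ext ` \<U> \<in> strict_Cov K f X OpX CovX"
      "(\<lambda>U. f ` U) ` \<U> = (\<lambda>\<V>. (\<lambda>V. f ` X \<inter> V) ` \<V>) (ext ` \<U>)"
      using cov by (simp_all add: strict_Cov_def)
    then show ?thesis unfolding cap2_def by (rule rev_image_eqI)
  qed
  show ?thesis
    unfolding strict_embedding_def strictly_continuous_def
  proof (intro conjI ballI)
    fix \<V> assume "\<V> \<in> strict_Cov K f X OpX CovX"
    then show "?pre ` \<V> \<in> CovX" by (simp add: strict_Cov_def)
  next
    show "(\<lambda>\<U>. (\<lambda>U. f ` U) ` \<U>) ` CovX \<subseteq> cap2 (strict_Cov K f X OpX CovX) (f ` X)"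
      using traces by blast
  qed (use sub inj in auto)
qed

lemma compactification_image_subset:
  assumes "gts X OpX CovX" "compactification (gts_top OpX) K f"
  shows "f ` X \<subseteq> topspace K"
  using embedding_map_image_subset_topspace[of "gts_top OpX" K f] assms
  by (simp add: compactification_def topspace_gts_top)

lemma strict_compactification_strict:
  assumes gts: "gts X OpX CovX" and comp: "compactification (gts_top OpX) K f"
  shows "strict_compactification X OpX CovX (topspace K) (strict_Op K f X OpX) (strict_Cov K f X OpX CovX) f"
proof -
  let ?T = "topology_generated_by (strict_Op K f X OpX)"
  have sub: "f ` X \<subseteq> topspace K"
    using gts comp by (rule compactification_image_subset)
  have top: "topspace ?T = topspace K" and id: "continuous_map K ?T id"
    using gts_space_open[OF gts] sub
    by (rule topspace_strict_topology, rule continuous_map_id_strict_topology)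
  have "compact_space ?T"
    using id top by (rule compact_space_coarser) (use comp in \<open>simp add: compactification_def\<close>)
  moreover have "?T closure_of (f ` X) = topspace K"
  proof
    show "?T closure_of (f ` X) \<subseteq> topspace K"
      using closure_of_subset_topspace top by metis
    show "topspace K \<subseteq> ?T closure_of (f ` X)"
      using closure_of_coarser[OF id, of "f ` X"] comp
      by (simp add: compactification_def topspace_gts_top[OF gts])
  qed
  moreover have "strict_embedding X OpX CovX (topspace K) (strict_Op K f X OpX) (strict_Cov K f X OpX CovX) f"
    using comp by (intro strict_embedding_strict[OF gts]) (simp add: compactification_def)
  ultimately show ?thesis
    using gts_strict[OF gts sub]
    by (simp add: strict_compactification_def topologically_compact_def gts_top_def)
qed

lemma compactification_eq_strict_topology:
  assumes gts: "gts X OpX CovX" and comp: "compactification (gts_top OpX) K f"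
    and "Hausdorff_space (topology_generated_by (strict_Op K f X OpX))"
  shows "K = topology_generated_by (strict_Op K f X OpX)"
proof -
  have sub: "f ` X \<subseteq> topspace K"
    using gts comp by (rule compactification_image_subset)
  show ?thesis
    using comp assms(3) continuous_map_id_strict_topology[OF gts_space_open[OF gts] sub]
      topspace_strict_topology[OF gts_space_open[OF gts] sub]
    by (intro sym[OF compact_Hausdorff_coarser_eq]) (simp_all add: compactification_def)
qed

lemma cap2_strict_Cov_remainder:
  assumes gts: "gts X OpX CovX" and open_image: "openin K (f ` X)"
  defines "Y \<equiv> topspace K - f ` X"
  shows "cap2 (strict_Cov K f X OpX CovX) Y = Pow {A. openin (subtopology K Y) A}"
proof
  show "cap2 (strict_Cov K f X OpX CovX) Y \<subseteq> Pow {A. openin (subtopology K Y) A}"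
    by (auto simp: cap2_def strict_Cov_def strict_Op_def openin_subtopology)
next
  show "Pow {A. openin (subtopology K Y) A} \<subseteq> cap2 (strict_Cov K f X OpX CovX) Y"
  proof
    fix \<A> assume "\<A> \<in> Pow {A. openin (subtopology K Y) A}"
    then have "\<forall>A\<in>\<A>. \<exists>W. openin K W \<and> A = W \<inter> Y"
      by (auto simp: openin_subtopology)
    then obtain W where W: "\<And>A. A \<in> \<A> \<Longrightarrow> openin K (W A) \<and> A = W A \<inter> Y"
      by metis
    \<comment> \<open>Adding the open set \<open>f ` X\<close> makes every preimage \<open>X\<close>, so the family is admissible by (A3).\<close>
    define \<V> where "\<V> = (\<lambda>A. W A \<union> f ` X) ` \<A>"
    have pre_X: "f -` V \<inter> X = X" if "V \<in> \<V>" for V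
      using that by (auto simp: \<V>_def)
    have "\<V> \<subseteq> strict_Op K f X OpX"
    proof
      fix V assume "V \<in> \<V>"
      then have "openin K V" using W open_image by (auto simp: \<V>_def)
      then show "V \<in> strict_Op K f X OpX"
        using pre_X[OF \<open>V \<in> \<V>\<close>] gts_space_open[OF gts] by (simp add: strict_Op_def)
    qed
    moreover have "(\<lambda>V. f -` V \<inter> X) ` \<V> \<in> CovX"
    proof (rule gts_finite_Cov[OF gts])
      have "(\<lambda>V. f -` V \<inter> X) ` \<V> \<subseteq> {X}" using pre_X by auto
      then show "finite ((\<lambda>V. f -` V \<inter> X) ` \<V>)" by (rule finite_subset) simp
      show "(\<lambda>V. f -` V \<inter> X) ` \<V> \<subseteq> OpX" using pre_X gts_space_open[OF gts] by auto
    qed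
    moreover have "\<A> = (\<lambda>V. Y \<inter> V) ` \<V>"
    proof -
      have "Y \<inter> (W A \<union> f ` X) = A" if "A \<in> \<A>" for A
        using W[OF that] by (auto simp: Y_def)
      then show ?thesis
        by (simp add: \<V>_def image_image cong: image_cong)
    qed
    ultimately show "\<A> \<in> cap2 (strict_Cov K f X OpX CovX) Y"
      unfolding cap2_def strict_Cov_def by blast
  qed
qed

lemma topological_gts_remainder:
  assumes gts: "gts X OpX CovX" and open_image: "openin K (f ` X)"
  defines "Y \<equiv> topspace K - f ` X"
  shows "topological_gts Y (subspace_Op (strict_Cov K f X OpX CovX) Y)
           (subspace_Cov (strict_Cov K f X OpX CovX) Y)"
proof -
  let ?Op = "{A. openin (subtopology K Y) A}"
  have "gts Y ?Op (Pow ?Op)"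
    using gts_topology[of "subtopology K Y"] by (simp add: Y_def Int_absorb1)
  then have "subspace_Cov (strict_Cov K f X OpX CovX) Y = Pow ?Op"
    unfolding subspace_Cov_def cap2_strict_Cov_remainder[OF gts open_image, folded Y_def]
    by (intro gen_topology_generated_eq) (simp add: gen_topology_in_def)
  with \<open>gts Y ?Op (Pow ?Op)\<close> show ?thesis
    by (simp add: topological_gts_def subspace_Op_def)
qed

theorem proposition5p6:
  fixes X :: "'a set" and OpX :: "'a set set" and CovX :: "'a set set set"
    and K :: "'b topology" and \<alpha> :: "'a \<Rightarrow> 'b"
    and OpS :: "'b set set" and CovS :: "'b set set set"
  assumes gtsX: "gts X OpX CovX"
    and comp: "compactification (gts_top OpX) K \<alpha>"
    and OpS_def: "OpS = {V. openin K V \<and> \<alpha> -` V \<inter> X \<in> OpX}"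
    and CovS_def: "CovS = {\<V>. \<V> \<subseteq> OpS \<and> (\<lambda>V. \<alpha> -` V \<inter> X) ` \<V> \<in> CovX}"
  shows "strict_compactification X OpX CovX (topspace K) OpS CovS \<alpha> \<and>
         (Hausdorff_space (topology_generated_by OpS) \<longrightarrow> K = topology_generated_by OpS) \<and>
         (openin K (\<alpha> ` X) \<longrightarrow>
           topological_gts (topspace K - \<alpha> ` X)
             (subspace_Op CovS (topspace K - \<alpha> ` X)) (subspace_Cov CovS (topspace K - \<alpha> ` X)))"
proof -
  have OpS: "OpS = strict_Op K \<alpha> X OpX"
    using OpS_def by (simp add: strict_Op_def)
  have CovS: "CovS = strict_Cov K \<alpha> X OpX CovX"
    using CovS_def by (simp add: strict_Cov_def OpS)
  show ?thesis
    unfolding OpS CovS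
    using strict_compactification_strict[OF gtsX comp]
      compactification_eq_strict_topology[OF gtsX comp] topological_gts_remainder[OF gtsX]
    by blast
qed

end
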